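(* The class of data languages accepted by SAFA is not closed under Kleene closure: there exists a data language $L$ accepted by some SAFA such that no SAFA accepts $L^*=\{u_1u_2\cdots u_n: n\geq 0,\ u_i\in L\}$.
   Context: $D$ is a fixed countably infinite set of data values; for a finite alphabet $\Sigma$, data words are elements of $(\Sigma\times D)^*$. A set augmented finite automaton (SAFA) is a tuple $M=(Q,\Sigma\times D,q_0,F,H,\delta)$: $Q$ finite set of states, $q_0\in Q$ initial, $F\subseteq Q$ final, $H=\{h_1,\dots,h_m\}$ a finite collection of (names of) sets of data values, $\delta\subseteq Q\times\Sigma\times C\times OP\times Q$ with $C=\{p(h_i),\,!p(h_i): h_i\in H\}$, $OP=\{-\}\cup\{\mathsf{ins}(h_i):h_i\in H\}$. Configurations are $(q,\langle S_1,\dots,S_m\rangle)$ with $S_i\subseteq D$ finite; initially state $q_0$ and all sets empty. On reading $(a,d)$, a transition $(q,a,\alpha,op,q')$ from the current state may be taken if $\alpha=p(h_i)$ and $d\in S_i$, or $\alpha=\,!p(h_i)$ and $d\notin S_i$; then the state becomes $q'$ and if $op=\mathsf{ins}(h_j)$ the value $d$ is added to $S_j$ ($op=-$ changes nothing). A word is accepted if some run reads it entirely and ends in $F$; $L(M)$ is the set of accepted words. *)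

theory Defs
  imports Main
begin

text \<open>Data values: the countably infinite set D is rendered as the type nat.
  Letters of the finite alphabet are natural numbers drawn from a finite set Sigma;
  states are natural numbers drawn from a finite set Q; the m sets h_1..h_m are
  indexed by 0..<m.\<close>

type_synonym data_word = "(nat \<times> nat) list"   \<comment> \<open>(letter, data value)\<close>

datatype cond = Pin nat | NotPin nat
datatype setop = NoOp | Ins nat

record safa =
  states :: "nat set"
  alph   :: "nat set"
  init   :: nat
  finals :: "nat set"
  nsets  :: nat
  trans  :: "(nat \<times> nat \<times> cond \<times> setop \<times> nat) set"

definition cond_idx :: "cond \<Rightarrow> nat" where
  "cond_idx c = (case c of Pin i \<Rightarrow> i | NotPin i \<Rightarrow> i)"

definition op_ok :: "nat \<Rightarrow> setop \<Rightarrow> bool" where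
  "op_ok m op = (case op of NoOp \<Rightarrow> True | Ins j \<Rightarrow> j < m)"

definition wf_safa :: "safa \<Rightarrow> bool" where
  "wf_safa M \<longleftrightarrow> finite (states M) \<and> finite (alph M) \<and> init M \<in> states M
     \<and> finals M \<subseteq> states M
     \<and> (\<forall>(q,a,c,op,q') \<in> trans M. q \<in> states M \<and> a \<in> alph M \<and> cond_idx c < nsets M
            \<and> op_ok (nsets M) op \<and> q' \<in> states M)"

definition sat :: "cond \<Rightarrow> (nat \<Rightarrow> nat set) \<Rightarrow> nat \<Rightarrow> bool" where
  "sat c S d = (case c of Pin i \<Rightarrow> d \<in> S i | NotPin i \<Rightarrow> d \<notin> S i)"

definition apply_op :: "setop \<Rightarrow> (nat \<Rightarrow> nat set) \<Rightarrow> nat \<Rightarrow> (nat \<Rightarrow> nat set)" where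
  "apply_op op S d = (case op of NoOp \<Rightarrow> S | Ins j \<Rightarrow> S(j := insert d (S j)))"

type_synonym config = "nat \<times> (nat \<Rightarrow> nat set)"

definition step :: "safa \<Rightarrow> config \<Rightarrow> nat \<times> nat \<Rightarrow> config \<Rightarrow> bool" where
  "step M c x c' \<longleftrightarrow> (\<exists>cd op. (fst c, fst x, cd, op, fst c') \<in> trans M
       \<and> sat cd (snd c) (snd x) \<and> snd c' = apply_op op (snd c) (snd x))"

inductive run :: "safa \<Rightarrow> config \<Rightarrow> data_word \<Rightarrow> config \<Rightarrow> bool" for M where
  run_nil: "run M c [] c"
| run_cons: "step M c x c' \<Longrightarrow> run M c' w c'' \<Longrightarrow> run M c (x # w) c''"

definition lang :: "safa \<Rightarrow> data_word set" where
  "lang M = {w. \<exists>c. run M (init M, \<lambda>_. {}) w c \<and> fst c \<in> finals M}"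

definition kleene_star :: "data_word set \<Rightarrow> data_word set" where
  "kleene_star L = {concat us | us. set us \<subseteq> L}"

end

(* Let L = {(0,d)(0,d)}. Suppose a SAFA M with m sets accepts L*, and feed it mN + 1 copies of
   the round (0,0)(0,0)(0,1)(0,1)...(0,N-1)(0,N-1), where N = 2^m + 1. The sets only grow and
   stay inside {..<m} x {..<N}, so some round is read without changing them, and at its start
   two data values i and k lie in exactly the same sets. From the first (0,k) of that round on,
   the run is invariant under interchanging i and k, so M also accepts a word in which (0,k)
   is directly followed by (0,i) at a pair boundary; that word is not in L*. *)
theory Submission
  imports Defs "HOL-Combinatorics.Transposition"
begin

lemma run_Nil_iff [simp]: "run M c [] c' \<longleftrightarrow> c' = c"
  by (auto elim: run.cases intro: run.intros)

lemma run_Cons_iff [simp]: "run M c (x # w) c'' \<longleftrightarrow> (\<exists>c'. step M c x c' \<and> run M c' w c'')"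
  by (blast elim: run.cases intro: run.intros)

lemma run_append_iff: "run M c (u @ v) c'' \<longleftrightarrow> (\<exists>c'. run M c u c' \<and> run M c' v c'')"
  by (induction u arbitrary: c) auto

lemma apply_op_mono: "S j \<subseteq> apply_op op S d j"
  by (cases op) (auto simp: apply_op_def)

lemma step_sets_mono: "step M c x c' \<Longrightarrow> snd c j \<subseteq> snd c' j"
  unfolding step_def using apply_op_mono by metis

lemma run_sets_mono: "run M c w c' \<Longrightarrow> snd c j \<subseteq> snd c' j"
  by (induction rule: run.induct) (use step_sets_mono in blast)+

lemma run_Sigma_mono: "run M c w c' \<Longrightarrow> Sigma UNIV (snd c) \<subseteq> Sigma UNIV (snd c')"
  using run_sets_mono by blast

lemma step_sets_bounded:
  assumes "step M c x c'" "wf_safa M" "Sigma UNIV (snd c) \<subseteq> {..<nsets M} \<times> {..<N}" "snd x < N"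
  shows "Sigma UNIV (snd c') \<subseteq> {..<nsets M} \<times> {..<N}"
proof -
  obtain cd op where t: "(fst c, fst x, cd, op, fst c') \<in> trans M"
    and c': "snd c' = apply_op op (snd c) (snd x)"
    using assms(1) unfolding step_def by blast
  have "op_ok (nsets M) op"
    using assms(2) t unfolding wf_safa_def by fast
  then show ?thesis
    using assms(3,4) c' by (fastforce simp: apply_op_def op_ok_def split: setop.splits if_splits)
qed

lemma run_sets_bounded:
  "run M c w c' \<Longrightarrow> wf_safa M \<Longrightarrow> Sigma UNIV (snd c) \<subseteq> {..<nsets M} \<times> {..<N}
    \<Longrightarrow> \<forall>x\<in>set w. snd x < N \<Longrightarrow> Sigma UNIV (snd c') \<subseteq> {..<nsets M} \<times> {..<N}"
  by (induction rule: run.induct) (auto dest: step_sets_bounded)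

lemma run_concat_stable_segment_or_growth:
  assumes "run M c (concat ws) c'" "finite (Sigma UNIV (snd c'))"
  shows "(\<exists>us w vs c1 c2. ws = us @ w # vs \<and> run M c (concat us) c1 \<and> run M c1 w c2
            \<and> snd c2 = snd c1 \<and> run M c2 (concat vs) c')
    \<or> card (Sigma UNIV (snd c)) + length ws \<le> card (Sigma UNIV (snd c'))"
  using assms(1)
proof (induction ws arbitrary: c)
  case Nil
  then show ?case by simp
next
  case (Cons w ws)
  then obtain c1 where c1: "run M c w c1" and rest: "run M c1 (concat ws) c'"
    by (auto simp: run_append_iff)
  show ?case
  proof (cases "snd c1 = snd c")
    case True
    then show ?thesis
      using c1 rest by (intro disjI1 exI[of _ "[]"] exI[of _ w] exI[of _ ws] exI[of _ c] exI[of _ c1]) auto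
  next
    case False
    have "Sigma UNIV (snd c) \<subset> Sigma UNIV (snd c1)"
      using run_Sigma_mono[OF c1] False by auto
    then have grow: "card (Sigma UNIV (snd c)) < card (Sigma UNIV (snd c1))"
      using run_Sigma_mono[OF rest] assms(2) by (meson psubset_card_mono rev_finite_subset)
    from Cons.IH[OF rest] show ?thesis
    proof
      assume "\<exists>us w' vs c1' c2. ws = us @ w' # vs \<and> run M c1 (concat us) c1' \<and> run M c1' w' c2
            \<and> snd c2 = snd c1' \<and> run M c2 (concat vs) c'"
      then show ?thesis
        using c1 by (intro disjI1) (metis append_Cons concat.simps(2) run_append_iff)
    qed (use grow in simp)
  qed
qed

lemma run_concat_stable_segment:
  assumes "run M c (concat ws) c'" "finite (Sigma UNIV (snd c'))"
    "card (Sigma UNIV (snd c')) < length ws"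
  shows "\<exists>us w vs c1 c2. ws = us @ w # vs \<and> run M c (concat us) c1 \<and> run M c1 w c2
           \<and> snd c2 = snd c1 \<and> run M c2 (concat vs) c'"
  using run_concat_stable_segment_or_growth[OF assms(1,2)] assms(3) by (meson add_leD2 leD)

lemma run_stable_segment_middle:
  assumes "run M c u c1" "run M c1 v c2" "snd c2 = snd c"
  shows "snd c1 = snd c"
  using run_sets_mono[OF assms(1)] run_sets_mono[OF assms(2)] assms(3) by (metis ext subset_antisym)

lemma same_membership_pair:
  assumes "Sigma UNIV S \<subseteq> {..<m} \<times> UNIV" "finite A" "2 ^ m < card A"
  shows "\<exists>i\<in>A. \<exists>k\<in>A. i \<noteq> k \<and> (\<forall>j. i \<in> S j \<longleftrightarrow> k \<in> S j)"
proof -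
  define profile where "profile d = {j. d \<in> S j}" for d
  have "profile ` A \<subseteq> Pow {..<m}"
    using assms(1) unfolding profile_def by auto
  then have "card (profile ` A) \<le> 2 ^ m"
    by (metis card_Pow card_lessThan card_mono finite_Pow_iff finite_lessThan)
  then have "\<not> inj_on profile A"
    using assms(3) by (intro pigeonhole) simp
  then show ?thesis
    unfolding inj_on_def profile_def by blast
qed

lemma step_map_data:
  assumes "step M c x c'" "inj \<pi>"
  shows "step M (fst c, \<lambda>j. \<pi> ` snd c j) (apsnd \<pi> x) (fst c', \<lambda>j. \<pi> ` snd c' j)"
proof -
  obtain cd op where "(fst c, fst x, cd, op, fst c') \<in> trans M" "sat cd (snd c) (snd x)"
    "snd c' = apply_op op (snd c) (snd x)"
    using assms(1) unfolding step_def by blast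
  then show ?thesis
    using assms(2) unfolding step_def
    by (intro exI[of _ cd] exI[of _ op])
      (auto simp: sat_def apply_op_def inj_image_mem_iff fun_eq_iff split: cond.splits setop.splits)
qed

lemma run_map_data:
  "run M c w c' \<Longrightarrow> inj \<pi> \<Longrightarrow>
    run M (fst c, \<lambda>j. \<pi> ` snd c j) (map (apsnd \<pi>) w) (fst c', \<lambda>j. \<pi> ` snd c' j)"
  by (induction rule: run.induct) (auto intro: run.intros step_map_data)

lemma run_transpose_data:
  assumes "run M c w c'" "\<forall>j. i \<in> snd c j \<longleftrightarrow> k \<in> snd c j"
  shows "run M c (map (apsnd (transpose i k)) w) (fst c', \<lambda>j. transpose i k ` snd c' j)"
proof -
  have "(\<lambda>j. transpose i k ` snd c j) = snd c"
    using assms(2) by simp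
  then show ?thesis
    using run_map_data[OF assms(1) inj_transpose[of i k]] by simp
qed

lemma lang_transpose_in_stable_segment:
  assumes "run M (init M, \<lambda>_. {}) u c1" "run M c1 (x @ y) c2" "snd c2 = snd c1"
    "run M c2 v cf" "fst cf \<in> finals M" "\<forall>j. i \<in> snd c1 j \<longleftrightarrow> k \<in> snd c1 j"
  shows "u @ x @ map (apsnd (transpose i k)) (y @ v) \<in> lang M"
proof -
  obtain cx where x: "run M c1 x cx" and y: "run M cx y c2"
    using assms(2) run_append_iff by blast
  have "snd cx = snd c1"
    using run_stable_segment_middle[OF x y assms(3)] .
  moreover have "run M cx (y @ v) cf"
    using y assms(4) run_append_iff by blast
  ultimately have "run M cx (map (apsnd (transpose i k)) (y @ v))
      (fst cf, \<lambda>j. transpose i k ` snd cf j)"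
    using assms(6) by (intro run_transpose_data) auto
  then have "run M (init M, \<lambda>_. {}) (u @ x @ map (apsnd (transpose i k)) (y @ v))
      (fst cf, \<lambda>j. transpose i k ` snd cf j)"
    using assms(1) x run_append_iff by blast
  then show ?thesis
    using assms(5) unfolding lang_def by auto
qed

lemma kleene_star_range: "kleene_star (range f) = range (\<lambda>xs. concat (map f xs))"
proof -
  have "set us \<subseteq> range f \<longleftrightarrow> (\<exists>xs. us = map f xs)" for us :: "data_word list"
    by (auto simp: ex_map_conv)
  then show ?thesis
    unfolding kleene_star_def by auto
qed

lemma concat_in_kleene_star: "set ws \<subseteq> kleene_star L \<Longrightarrow> concat ws \<in> kleene_star L"
proof (induction ws)
  case Nil
  show ?case unfolding kleene_star_def by (intro CollectI exI[of _ "[]"]) simp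
next
  case (Cons w ws)
  then obtain us vs where "w = concat us" "set us \<subseteq> L" "concat ws = concat vs" "set vs \<subseteq> L"
    unfolding kleene_star_def by auto
  then show ?case
    unfolding kleene_star_def by (auto intro!: exI[of _ "us @ vs"])
qed

definition twin :: "nat \<Rightarrow> data_word" where
  "twin d = [(0, d), (0, d)]"

definition twin_safa :: safa where
  "twin_safa = \<lparr>states = {0, 1, 2}, alph = {0}, init = 0, finals = {2}, nsets = 1,
     trans = {(0, 0, NotPin 0, Ins 0, 1), (1, 0, Pin 0, NoOp, 2)}\<rparr>"

lemma trans_twin_safa: "trans twin_safa = {(0, 0, NotPin 0, Ins 0, 1), (1, 0, Pin 0, NoOp, 2)}"
  by (simp add: twin_safa_def)

lemma wf_twin_safa: "wf_safa twin_safa"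
  by (auto simp: wf_safa_def twin_safa_def cond_idx_def op_ok_def)

lemma lang_twin_safa: "lang twin_safa = range twin"
proof
  show "lang twin_safa \<subseteq> range twin"
  proof
    fix w assume "w \<in> lang twin_safa"
    then obtain c where "run twin_safa (0, \<lambda>_. {}) w c" "fst c = 2"
      unfolding lang_def by (auto simp: twin_safa_def)
    moreover have final_stuck: "run twin_safa (2, S) v c' \<longleftrightarrow> v = [] \<and> c' = (2, S)" for S v c'
      by (cases v) (auto simp: step_def twin_safa_def)
    ultimately show "w \<in> range twin"
      by (cases w rule: remdups_adj.cases)
        (auto simp: step_def trans_twin_safa sat_def apply_op_def twin_def final_stuck)
  qed
next
  show "range twin \<subseteq> lang twin_safa"
  proof
    fix w assume "w \<in> range twin"
    then obtain d where w: "w = [(0, d), (0, d)]" unfolding twin_def by blast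
    have "run twin_safa (0, \<lambda>_. {}) w (2, (\<lambda>_. {})(0 := {d}))"
      unfolding w by (auto simp: step_def twin_safa_def sat_def apply_op_def)
    then show "w \<in> lang twin_safa" unfolding lang_def by (auto simp: twin_safa_def)
  qed
qed

lemma twins_adjacent_eq:
  "concat (map twin xs) @ (a, d) # (b, e) # v = concat (map twin ys) \<Longrightarrow> d = e"
proof (induction xs arbitrary: ys)
  case Nil
  then show ?case by (cases ys) (auto simp: twin_def)
next
  case (Cons x xs)
  then show ?case by (cases ys) (auto simp: twin_def)
qed

lemma twins_in_kleene_star: "concat (map twin ds) \<in> kleene_star (range twin)"
  by (simp add: kleene_star_range)

lemma kleene_star_twin_adjacent_eq:
  assumes "u \<in> kleene_star (range twin)" "u @ (a, d) # (b, e) # v \<in> kleene_star (range twin)"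
  shows "d = e"
  using assms twins_adjacent_eq unfolding kleene_star_range by fastforce

lemma twins_upt_split:
  "k < N \<Longrightarrow> concat (map twin [0..<N])
     = concat (map twin [0..<k]) @ (0, k) # (0, k) # concat (map twin [Suc k..<N])"
proof -
  assume "k < N"
  then have "[0..<N] = [0..<k] @ k # [Suc k..<N]"
    using upt_add_eq_append[of 0 k "N - k"] upt_conv_Cons[of k N] by simp
  then show ?thesis
    by (simp add: twin_def)
qed

lemma lang_concat_stable_segment:
  assumes "wf_safa M" "concat ws \<in> lang M" "\<forall>x\<in>set (concat ws). snd x < N"
    "nsets M * N < length ws"
  shows "\<exists>us w vs c1 c2 cf. ws = us @ w # vs \<and> run M (init M, \<lambda>_. {}) (concat us) c1
           \<and> run M c1 w c2 \<and> snd c2 = snd c1 \<and> run M c2 (concat vs) cf \<and> fst cf \<in> finals M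
           \<and> Sigma UNIV (snd c1) \<subseteq> {..<nsets M} \<times> {..<N}"
proof -
  obtain cf where run: "run M (init M, \<lambda>_. {}) (concat ws) cf" and final: "fst cf \<in> finals M"
    using assms(2) unfolding lang_def by auto
  have bounded: "Sigma UNIV (snd cf) \<subseteq> {..<nsets M} \<times> {..<N}"
    using run_sets_bounded[OF run assms(1) _ assms(3)] by simp
  then have "card (Sigma UNIV (snd cf)) < length ws"
    using card_mono[OF _ bounded] assms(4) by (simp add: card_cartesian_product)
  then obtain us w vs c1 c2 where segments: "ws = us @ w # vs" "run M (init M, \<lambda>_. {}) (concat us) c1"
    "run M c1 w c2" "snd c2 = snd c1" and post: "run M c2 (concat vs) cf"
    using run_concat_stable_segment[OF run] finite_subset[OF bounded] by blast
  moreover have "Sigma UNIV (snd c1) \<subseteq> {..<nsets M} \<times> {..<N}"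
    using run_Sigma_mono[OF post] segments(4) bounded by auto
  ultimately show ?thesis
    using post final by blast
qed

lemma lang_ne_kleene_star_twins:
  assumes "wf_safa M"
  shows "lang M \<noteq> kleene_star (range twin)"
proof
  assume lang: "lang M = kleene_star (range twin)"
  \<comment> \<open>more rounds than the sets can grow, more data values than membership profiles\<close>
  define N :: nat where "N = 2 ^ nsets M + 1"
  define round where "round = concat (map twin [0..<N])"
  define ws where "ws = replicate (nsets M * N + 1) round"
  have ws_star: "set ws \<subseteq> kleene_star (range twin)"
    using twins_in_kleene_star unfolding ws_def round_def by (metis in_set_replicate subsetI)
  then have "concat ws \<in> lang M"
    using lang concat_in_kleene_star by blast
  moreover have "\<forall>x\<in>set (concat ws). snd x < N"
    unfolding ws_def round_def twin_def by auto
  moreover have "nsets M * N < length ws"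
    unfolding ws_def by simp
  ultimately obtain us w vs c1 c2 cf where ws: "ws = us @ w # vs"
    and pre: "run M (init M, \<lambda>_. {}) (concat us) c1" and seg: "run M c1 w c2"
    and stable: "snd c2 = snd c1" and post: "run M c2 (concat vs) cf" and final: "fst cf \<in> finals M"
    and bounded: "Sigma UNIV (snd c1) \<subseteq> {..<nsets M} \<times> {..<N}"
    using lang_concat_stable_segment[OF assms] by blast
  moreover have "2 ^ nsets M < card {..<N}"
    unfolding N_def by simp
  ultimately obtain i k where "k < N" "i \<noteq> k" and same: "\<forall>j. i \<in> snd c1 j \<longleftrightarrow> k \<in> snd c1 j"
    using same_membership_pair[of "snd c1" "nsets M" "{..<N}"] by blast
  define A where "A = concat (map twin [0..<k])"
  define B where "B = concat (map twin [Suc k..<N])"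
  have "w = round"
    using ws unfolding ws_def by (metis in_set_conv_decomp in_set_replicate)
  then have "w = (A @ [(0, k)]) @ (0, k) # B"
    using twins_upt_split[OF \<open>k < N\<close>] unfolding round_def A_def B_def by simp
  then have "(concat us @ A) @ (0, k) # (0, i) # map (apsnd (transpose i k)) (B @ concat vs)
      \<in> lang M"
    using lang_transpose_in_stable_segment[OF pre _ stable post final same,
        where x = "A @ [(0, k)]" and y = "(0, k) # B"] seg
    by simp
  moreover have "concat us @ A \<in> kleene_star (range twin)"
    using concat_in_kleene_star[of "us @ [A]"] ws_star ws twins_in_kleene_star
    unfolding A_def by simp
  ultimately show False
    using kleene_star_twin_adjacent_eq \<open>i \<noteq> k\<close> lang by blast
qed

theorem theorem7:
  shows "\<exists>(Sigma :: nat set) (L :: data_word set).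
           finite Sigma \<and>
           (\<exists>M. wf_safa M \<and> alph M = Sigma \<and> lang M = L) \<and>
           \<not> (\<exists>M'. wf_safa M' \<and> lang M' = kleene_star L)"
proof (intro exI[of _ "{0}"] exI[of _ "range twin"] conjI)
  show "finite {0 :: nat}"
    by simp
  show "\<exists>M. wf_safa M \<and> alph M = {0} \<and> lang M = range twin"
    using wf_twin_safa lang_twin_safa by (intro exI[of _ twin_safa]) (simp add: twin_safa_def)
  show "\<not> (\<exists>M'. wf_safa M' \<and> lang M' = kleene_star (range twin))"
    using lang_ne_kleene_star_twins by blast
qed

end
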